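(* Let $n\ge2$, $\alpha\in[0,\pi/2)$, $A,B,C,D\in\Pi_{s,\alpha}^n$, $q\in\mathbb{C}$ with $0<|q|\le1$, and $f\in\mathcal{F}$. If $\mathcal{R}(A)\le\mathcal{R}(C)$ and $\mathcal{R}(B)\le\mathcal{R}(D)$, then \[ |q|\,w_q(A\sigma_fB)\le\sec^3(\alpha)\,w_q(C\sigma_fD). \]
   Context: For $\alpha\in[0,\pi/2)$, $S_\alpha=\{z\in\mathbb{C}:\operatorname{Re}z>0,\ |\operatorname{Im}z|\le\tan(\alpha)\operatorname{Re}z\}$, and $\Pi_{s,\alpha}^n$ is the set of $n\times n$ complex matrices whose numerical range is contained in $S_\alpha$. $\mathcal{R}(X)=\frac{X+X^*}{2}$, and $\le$ is the Loewner order. $\mathcal{F}$ is the set of operator monotone $f:(0,\infty)\to(0,\infty)$ with $f(1)=1$, each with a probability measure $\nu_f$ on $[0,1]$ such that $f(x)=\int_0^1((1-s)+sx^{-1})^{-1}d\nu_f(s)$. For accretive $X,Y$, $X!_sY=((1-s)X^{-1}+sY^{-1})^{-1}$ and $X\sigma_fY=\int_0^1(X!_sY)\,d\nu_f(s)$. $w_q(X)=\sup\{|\langle Xx,y\rangle|:\|x\|=\|y\|=1,\ \langle x,y\rangle=q\}$. *)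

theory Defs
  imports "HOL-Probability.Probability"
begin

type_synonym ('n) cmat = "complex ^ 'n ^ 'n"

definition cinner :: "complex ^ ('n::finite) \<Rightarrow> complex ^ 'n \<Rightarrow> complex" where
  "cinner x y = (\<Sum>i\<in>UNIV. x $ i * cnj (y $ i))"

definition adjoint_mat :: "('n::finite) cmat \<Rightarrow> ('n::finite) cmat" where
  "adjoint_mat X = (\<chi> i j. cnj (X $ j $ i))"

definition realpart_mat :: "('n::finite) cmat \<Rightarrow> ('n::finite) cmat" where
  "realpart_mat X = (\<chi> i j. (X $ i $ j + cnj (X $ j $ i)) / 2)"

definition numerical_range :: "('n::finite) cmat \<Rightarrow> complex set" where
  "numerical_range X = {cinner (X *v x) x | x. norm x = 1}"

definition sector :: "real \<Rightarrow> complex set" where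
  "sector \<alpha> = {z. 0 < Re z \<and> \<bar>Im z\<bar> \<le> tan \<alpha> * Re z}"

definition Pi_sector :: "real \<Rightarrow> ('n::finite) cmat set" where
  "Pi_sector \<alpha> = {X. numerical_range X \<subseteq> sector \<alpha>}"

definition psd :: "('n::finite) cmat \<Rightarrow> bool" where
  "psd M \<longleftrightarrow> (\<forall>x. Im (cinner (M *v x) x) = 0 \<and> 0 \<le> Re (cinner (M *v x) x))"

definition loewner_le :: "('n::finite) cmat \<Rightarrow> ('n::finite) cmat \<Rightarrow> bool" where
  "loewner_le H K \<longleftrightarrow> psd (K - H)"

definition unitary_mat :: "('n::finite) cmat \<Rightarrow> bool" where
  "unitary_mat U \<longleftrightarrow> adjoint_mat U ** U = mat 1"

definition diag_mat :: "('n \<Rightarrow> complex) \<Rightarrow> ('n::finite) cmat" where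
  "diag_mat d = (\<chi> i j. if i = j then d i else 0)"

text \<open>Operator monotonicity of f on positive definite n x n matrices, with the
  functional calculus f(U diag(d) U^*) = U diag(f o d) U^*.\<close>
definition operator_monotone_dim :: "(real \<Rightarrow> real) \<Rightarrow> ('n::finite) itself \<Rightarrow> bool" where
  "operator_monotone_dim f _ \<longleftrightarrow>
     (\<forall>(U::'n cmat) V (d::'n \<Rightarrow> real) e.
        unitary_mat U \<and> unitary_mat V \<and> (\<forall>i. 0 < d i \<and> 0 < e i) \<and>
        loewner_le (U ** diag_mat (\<lambda>i. complex_of_real (d i)) ** adjoint_mat U)
                   (V ** diag_mat (\<lambda>i. complex_of_real (e i)) ** adjoint_mat V)
        \<longrightarrow> loewner_le (U ** diag_mat (\<lambda>i. complex_of_real (f (d i))) ** adjoint_mat U)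
                       (V ** diag_mat (\<lambda>i. complex_of_real (f (e i))) ** adjoint_mat V))"

definition harm_mean :: "real \<Rightarrow> ('n::finite) cmat \<Rightarrow> ('n::finite) cmat \<Rightarrow> ('n::finite) cmat" where
  "harm_mean s X Y = matrix_inv ((1 - s) *\<^sub>R matrix_inv X + s *\<^sub>R matrix_inv Y)"

definition matrix_mean :: "real measure \<Rightarrow> ('n::finite) cmat \<Rightarrow> ('n::finite) cmat \<Rightarrow> ('n::finite) cmat" where
  "matrix_mean \<nu> X Y = integral\<^sup>L \<nu> (\<lambda>s. harm_mean s X Y)"

definition q_numerical_radius :: "complex \<Rightarrow> ('n::finite) cmat \<Rightarrow> real" where
  "q_numerical_radius q X =
     Sup {cmod (cinner (X *v x) y) | x y. norm x = 1 \<and> norm y = 1 \<and> cinner x y = q}"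

end

theory Submission
  imports Defs
begin

text \<open>
  Write \<open>h(u, w) = \<langle>X u, w\<rangle>\<close> and \<open>t = tan \<alpha>\<close>. For \<open>X \<in> Pi_sector \<alpha>\<close> the skew part of \<open>h\<close> is
  controlled by its Hermitian part, which yields
  \<open>2 Re h(u, w) \<le> a Re h(u, u) + b Re h(w, w)\<close> whenever \<open>a b \<ge> 1 + t\<^sup>2 = sec\<^sup>2 \<alpha>\<close>.
  With \<open>a = b = sec \<alpha>\<close> this bounds \<open>|h(x, y)|\<close> by \<open>sec \<alpha>\<close> times the mean of \<open>Re h(x, x)\<close> and
  \<open>Re h(y, y)\<close>; with \<open>a = 1, b = sec\<^sup>2 \<alpha>\<close>, applied to \<open>A\<close> and \<open>B\<close> at the vectors
  \<open>C\<^sup>-\<^sup>1 w\<close>, \<open>D\<^sup>-\<^sup>1 w\<close> for \<open>w = (C !\<^sub>s D) x\<close>, it turns \<open>R(A) \<le> R(C)\<close>, \<open>R(B) \<le> R(D)\<close> into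
  \<open>Re \<langle>(A !\<^sub>s B) x, x\<rangle> \<le> sec\<^sup>2 \<alpha> Re \<langle>(C !\<^sub>s D) x, x\<rangle>\<close>. Since the harmonic means are again
  sectorial and depend continuously on \<open>s\<close>, integrating against \<open>\<nu>\<close> gives
  \<open>|\<langle>(A \<sigma> B) x, y\<rangle>| \<le> sec\<^sup>3 \<alpha> / 2 (Re \<langle>(C \<sigma> D) x, x\<rangle> + Re \<langle>(C \<sigma> D) y, y\<rangle>)\<close>.
  Finally, for a unit vector \<open>z\<close> a second dimension provides a unit \<open>y\<close> with \<open>\<langle>z, y\<rangle> = q\<close>
  and \<open>|\<langle>K z, y\<rangle>| \<ge> |q| |\<langle>K z, z\<rangle>|\<close>, so \<open>Re \<langle>K z, z\<rangle> \<le> w\<^sub>q(K) / |q|\<close>.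
\<close>

lemma cinner_add_left: "cinner (x + y) z = cinner x z + cinner y z"
  by (simp add: cinner_def distrib_right sum.distrib)

lemma cinner_add_right: "cinner x (y + z) = cinner x y + cinner x z"
  by (simp add: cinner_def distrib_left sum.distrib)

lemma cinner_diff_left: "cinner (x - y) z = cinner x z - cinner y z"
  by (simp add: cinner_def left_diff_distrib sum_subtractf)

lemma cinner_diff_right: "cinner x (y - z) = cinner x y - cinner x z"
  by (simp add: cinner_def right_diff_distrib sum_subtractf)

lemma cinner_scaleC_left: "cinner (c *s x) y = c * cinner x y"
  by (simp add: cinner_def sum_distrib_left mult_ac)

lemma cinner_scaleC_right: "cinner x (c *s y) = cnj c * cinner x y"
  by (simp add: cinner_def sum_distrib_left mult_ac)

lemma cinner_scaleR_left: "cinner (r *\<^sub>R x) y = of_real r * cinner x y"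
  by (simp add: cinner_def sum_distrib_left mult_ac scaleR_conv_of_real[where 'a = complex])

lemma cinner_scaleR_right: "cinner x (r *\<^sub>R y) = of_real r * cinner x y"
  by (simp add: cinner_def sum_distrib_left mult_ac scaleR_conv_of_real[where 'a = complex])

lemma cinner_commute: "cinner y x = cnj (cinner x y)"
  by (simp add: cinner_def mult.commute)

lemma Re_cinner_commute: "Re (cinner y x) = Re (cinner x y)"
  by (subst cinner_commute) simp

lemma cinner_zero_left [simp]: "cinner 0 y = 0"
  by (simp add: cinner_def)

lemma cinner_zero_right [simp]: "cinner x 0 = 0"
  by (simp add: cinner_def)

lemma cinner_self: "cinner x x = of_real ((norm x)\<^sup>2)"
proof -
  have "cinner x x = of_real (\<Sum>i\<in>UNIV. (cmod (x $ i))\<^sup>2)"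
    unfolding cinner_def by (simp add: complex_norm_square del: of_real_power)
  also have "(\<Sum>i\<in>UNIV. (cmod (x $ i))\<^sup>2) = (norm x)\<^sup>2"
    by (simp add: norm_vec_def L2_set_def sum_nonneg)
  finally show ?thesis .
qed

lemma matrix_vector_mult_scaleR_right:
  fixes A :: "'a::real_algebra_1 ^ 'n ^ 'm"
  shows "A *v (r *\<^sub>R x) = r *\<^sub>R (A *v x)"
  by (simp add: matrix_vector_mult_def vec_eq_iff scaleR_sum_right)

lemma matrix_vector_mult_scaleR_left:
  fixes A :: "'a::real_algebra_1 ^ 'n ^ 'm"
  shows "(r *\<^sub>R A) *v x = r *\<^sub>R (A *v x)"
  by (simp add: matrix_vector_mult_def vec_eq_iff scaleR_sum_right)

lemmas cinner_form_simps =
  cinner_add_left cinner_add_right cinner_diff_left cinner_diff_right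
  cinner_scaleC_left cinner_scaleC_right cinner_scaleR_left cinner_scaleR_right
  matrix_vector_right_distrib matrix_vector_mult_diff_distrib
  matrix_vector_mult_scaleR_right vector_scalar_commute
  matrix_vector_mult_add_rdistrib matrix_vector_mult_scaleR_left

lemma cinner_realpart_mat: "cinner (realpart_mat X *v v) v = of_real (Re (cinner (X *v v) v))"
proof -
  have form: "cinner (X *v v) v = (\<Sum>i\<in>UNIV. \<Sum>j\<in>UNIV. X $ i $ j * v $ j * cnj (v $ i))"
    by (simp add: cinner_def matrix_vector_mult_def sum_distrib_right)
  have adj: "(\<Sum>i\<in>UNIV. \<Sum>j\<in>UNIV. cnj (X $ j $ i) * v $ j * cnj (v $ i))
      = cnj (\<Sum>i\<in>UNIV. \<Sum>j\<in>UNIV. X $ i $ j * v $ j * cnj (v $ i))"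
    by (subst sum.swap) (simp add: mult_ac)
  have "cinner (realpart_mat X *v v) v
      = (\<Sum>i\<in>UNIV. \<Sum>j\<in>UNIV. (X $ i $ j + cnj (X $ j $ i)) / 2 * v $ j * cnj (v $ i))"
    by (simp add: cinner_def realpart_mat_def matrix_vector_mult_def sum_distrib_right)
  also have "\<dots> = (cinner (X *v v) v + cnj (cinner (X *v v) v)) / 2"
    unfolding form adj[symmetric]
    by (simp add: add_divide_distrib distrib_right sum.distrib sum_divide_distrib)
  finally show ?thesis
    by (simp add: complex_add_cnj)
qed

lemma loewner_le_realpart_iff:
  "loewner_le (realpart_mat X) (realpart_mat Y)
     \<longleftrightarrow> (\<forall>v. Re (cinner (X *v v) v) \<le> Re (cinner (Y *v v) v))"
  by (simp add: loewner_le_def psd_def matrix_vector_mult_diff_rdistrib cinner_diff_left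
      cinner_realpart_mat)

definition sectorial :: "real \<Rightarrow> ('n::finite) cmat \<Rightarrow> bool" where
  "sectorial t X \<longleftrightarrow>
     (\<forall>v. \<bar>Im (cinner (X *v v) v)\<bar> \<le> t * Re (cinner (X *v v) v)) \<and>
     (\<forall>v. v \<noteq> 0 \<longrightarrow> 0 < Re (cinner (X *v v) v))"

lemma sectorial_Im_le: "sectorial t X \<Longrightarrow> \<bar>Im (cinner (X *v v) v)\<bar> \<le> t * Re (cinner (X *v v) v)"
  by (simp add: sectorial_def)

lemma sectorial_Re_pos: "sectorial t X \<Longrightarrow> v \<noteq> 0 \<Longrightarrow> 0 < Re (cinner (X *v v) v)"
  by (simp add: sectorial_def)

lemma sectorial_Re_nonneg: "sectorial t X \<Longrightarrow> 0 \<le> Re (cinner (X *v v) v)"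
  by (cases "v = 0") (auto simp: sectorial_def intro: less_imp_le)

lemma sector_scale_iff:
  assumes "0 < r"
  shows "of_real r * w \<in> sector \<alpha> \<longleftrightarrow> w \<in> sector \<alpha>"
  using assms by (simp add: sector_def abs_mult zero_less_mult_iff mult.left_commute)

lemma Pi_sector_imp_sectorial:
  assumes "X \<in> Pi_sector \<alpha>"
  shows "sectorial (tan \<alpha>) X"
proof -
  have sector: "cinner (X *v v) v \<in> sector \<alpha>" if "v \<noteq> 0" for v
  proof -
    define u where "u = (1 / norm v) *\<^sub>R v"
    have "norm u = 1"
      using that by (simp add: u_def)
    then have "cinner (X *v u) u \<in> sector \<alpha>"
      using assms by (auto simp: Pi_sector_def numerical_range_def)
    moreover have "cinner (X *v u) u = of_real ((1 / norm v)\<^sup>2) * cinner (X *v v) v"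
      by (simp add: u_def cinner_form_simps power2_eq_square)
    ultimately show ?thesis
      using that sector_scale_iff[of "(1 / norm v)\<^sup>2"] by simp
  qed
  then show ?thesis
    unfolding sectorial_def
  proof (intro conjI allI impI)
    fix v
    show "\<bar>Im (cinner (X *v v) v)\<bar> \<le> tan \<alpha> * Re (cinner (X *v v) v)"
      using sector[of v] by (cases "v = 0") (auto simp: sector_def)
  qed (use sector in \<open>simp add: sector_def\<close>)
qed

lemma matrix_inv_right: "invertible X \<Longrightarrow> X ** matrix_inv X = mat 1"
  unfolding invertible_def matrix_inv_def by (metis (mono_tags, lifting) someI_ex)

lemma matrix_vector_mult_matrix_inv: "invertible X \<Longrightarrow> X *v (matrix_inv X *v v) = v"
  by (simp add: matrix_vector_mul_assoc matrix_inv_right)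

lemma sectorial_invertible:
  assumes "sectorial t X"
  shows "invertible X"
proof -
  have "x = 0" if "X *v x = 0" for x
    using sectorial_Re_pos[OF assms, of x] that by auto
  then show ?thesis
    by (metis matrix_left_invertible_ker invertible_left_inverse)
qed

lemma sectorial_matrix_inv:
  assumes "sectorial t X"
  shows "sectorial t (matrix_inv X)"
proof -
  have inv: "X *v (matrix_inv X *v v) = v" for v
    using sectorial_invertible[OF assms] by (rule matrix_vector_mult_matrix_inv)
  have "cinner (matrix_inv X *v v) v = cnj (cinner (X *v u) u)" if "u = matrix_inv X *v v" for u v
    using inv[of v] cinner_commute that by metis
  moreover have "matrix_inv X *v v \<noteq> 0" if "v \<noteq> 0" for v
    using inv[of v] that by auto
  ultimately show ?thesis
    using assms unfolding sectorial_def by simp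
qed

lemma sectorial_convex_comb:
  assumes X: "sectorial t X" and Y: "sectorial t Y" and s: "0 \<le> s" "s \<le> 1"
  shows "sectorial t ((1 - s) *\<^sub>R X + s *\<^sub>R Y)"
  unfolding sectorial_def
proof (intro conjI allI impI)
  fix v
  let ?x = "cinner (X *v v) v" and ?y = "cinner (Y *v v) v"
  have form: "cinner (((1 - s) *\<^sub>R X + s *\<^sub>R Y) *v v) v = of_real (1 - s) * ?x + of_real s * ?y"
    by (simp add: cinner_form_simps)
  have "\<bar>(1 - s) * Im ?x + s * Im ?y\<bar> \<le> (1 - s) * \<bar>Im ?x\<bar> + s * \<bar>Im ?y\<bar>"
    using s by (metis abs_mult abs_of_nonneg abs_triangle_ineq diff_ge_0_iff_ge)
  also have "\<dots> \<le> (1 - s) * (t * Re ?x) + s * (t * Re ?y)"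
    using s sectorial_Im_le[OF X, of v] sectorial_Im_le[OF Y, of v]
    by (intro add_mono mult_left_mono) auto
  finally show "\<bar>Im (cinner (((1 - s) *\<^sub>R X + s *\<^sub>R Y) *v v) v)\<bar>
      \<le> t * Re (cinner (((1 - s) *\<^sub>R X + s *\<^sub>R Y) *v v) v)"
    unfolding form by (simp add: algebra_simps)
  assume "v \<noteq> 0"
  then have "0 < Re ?x" "0 < Re ?y"
    using X Y by (auto intro: sectorial_Re_pos)
  then have "0 < (1 - s) * Re ?x + s * Re ?y"
    using s by (cases "s = 0") (auto intro: add_nonneg_pos)
  then show "0 < Re (cinner (((1 - s) *\<^sub>R X + s *\<^sub>R Y) *v v) v)"
    unfolding form by simp
qed

lemma sectorial_skew_le:
  assumes "sectorial t X"
  shows "\<bar>Re (cinner (X *v x) y) - Re (cinner (X *v y) x)\<bar>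
           \<le> t * (Re (cinner (X *v x) x) + Re (cinner (X *v y) y))"
proof -
  define P where "P = x + \<i> *s y"
  define Q where "Q = x - \<i> *s y"
  have im: "2 * (Re (cinner (X *v x) y) - Re (cinner (X *v y) x))
      = Im (cinner (X *v Q) Q) - Im (cinner (X *v P) P)"
    and re: "Re (cinner (X *v P) P) + Re (cinner (X *v Q) Q)
      = 2 * (Re (cinner (X *v x) x) + Re (cinner (X *v y) y))"
    unfolding P_def Q_def by (simp_all add: cinner_form_simps algebra_simps)
  from re have "t * Re (cinner (X *v P) P) + t * Re (cinner (X *v Q) Q)
      = 2 * (t * (Re (cinner (X *v x) x) + Re (cinner (X *v y) y)))"
    by (metis distrib_left mult.left_commute)
  then show ?thesis
    using im sectorial_Im_le[OF assms, of P] sectorial_Im_le[OF assms, of Q]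
    by (simp add: abs_le_iff)
qed

lemma sectorial_skew_le_weighted:
  assumes X: "sectorial t X" and t: "0 \<le> t" and b: "0 < b"
  shows "\<bar>Re (cinner (X *v x) y) - Re (cinner (X *v y) x)\<bar>
           \<le> t\<^sup>2 * Re (cinner (X *v x) x) / b + b * Re (cinner (X *v y) y)"
proof (cases "t = 0")
  case True
  then show ?thesis
    using sectorial_skew_le[OF X, of x y] sectorial_Re_nonneg[OF X, of y] b by simp
next
  case False
  define c where "c = t / b"
  have c: "0 < c"
    using False t b by (simp add: c_def)
  have "Re (cinner (X *v (c *\<^sub>R x)) y) - Re (cinner (X *v y) (c *\<^sub>R x))
      = c * (Re (cinner (X *v x) y) - Re (cinner (X *v y) x))"
    and "Re (cinner (X *v (c *\<^sub>R x)) (c *\<^sub>R x)) = c\<^sup>2 * Re (cinner (X *v x) x)"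
    by (simp_all add: cinner_form_simps algebra_simps power2_eq_square)
  then have "c * \<bar>Re (cinner (X *v x) y) - Re (cinner (X *v y) x)\<bar>
      \<le> t * (c\<^sup>2 * Re (cinner (X *v x) x) + Re (cinner (X *v y) y))"
    using sectorial_skew_le[OF X, of "c *\<^sub>R x" y] c by (simp add: abs_mult)
  also have "\<dots> = c * (t\<^sup>2 * Re (cinner (X *v x) x) / b + b * Re (cinner (X *v y) y))"
    using b False by (simp add: c_def field_simps power2_eq_square)
  finally show ?thesis
    using c by simp
qed

lemma two_mult_le_quadratic:
  fixes a b l t :: real
  assumes b: "0 < b" and ab: "1 + t\<^sup>2 \<le> a * b"
  shows "2 * l + t\<^sup>2 / b \<le> a + b * l\<^sup>2"
proof -
  have "0 \<le> (b * l - 1)\<^sup>2 / b"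
    using b by simp
  then have "2 * l \<le> b * l\<^sup>2 + 1 / b"
    using b by (simp add: field_simps power2_eq_square)
  moreover have "1 / b + t\<^sup>2 / b \<le> a"
    using ab b by (simp add: field_simps mult.commute)
  ultimately show ?thesis
    by linarith
qed

lemma sectorial_Re_form_le:
  assumes X: "sectorial t X" and t: "0 \<le> t" and a: "0 < a" and b: "0 < b"
    and ab: "1 + t\<^sup>2 \<le> a * b"
  shows "2 * Re (cinner (X *v u) w) \<le> a * Re (cinner (X *v u) u) + b * Re (cinner (X *v w) w)"
proof (cases "u = 0")
  case True
  then show ?thesis
    using sectorial_Re_nonneg[OF X, of w] b by simp
next
  case False
  define p where "p = Re (cinner (X *v u) u)"
  have p: "0 < p"
    using sectorial_Re_pos[OF X False] by (simp add: p_def)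
  define l where "l = (Re (cinner (X *v u) w) + Re (cinner (X *v w) u)) / (2 * p)"
  \<comment> \<open>\<open>w'\<close> is orthogonal to \<open>u\<close> for the Hermitian part of the form, so only the skew part couples them.\<close>
  define w' where "w' = w - l *\<^sub>R u"
  have lp: "Re (cinner (X *v u) w) + Re (cinner (X *v w) u) = 2 * l * p"
    using p by (simp add: l_def)
  have e1: "Re (cinner (X *v u) w') = Re (cinner (X *v u) w) - l * p"
    and e2: "Re (cinner (X *v w') u) = Re (cinner (X *v w) u) - l * p"
    and e3: "Re (cinner (X *v w') w') = Re (cinner (X *v w) w)
               - l * (Re (cinner (X *v u) w) + Re (cinner (X *v w) u)) + l\<^sup>2 * p"
    by (simp_all add: w'_def p_def cinner_form_simps algebra_simps power2_eq_square)
  have skew: "\<bar>Re (cinner (X *v u) w') - Re (cinner (X *v w') u)\<bar>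
      \<le> t\<^sup>2 * p / b + b * Re (cinner (X *v w') w')"
    using sectorial_skew_le_weighted[OF X t b] by (simp add: p_def)
  have "p * (2 * l + t\<^sup>2 / b) \<le> p * (a + b * l\<^sup>2)"
    using p by (intro mult_left_mono two_mult_le_quadratic[OF b ab]) auto
  then have scalar: "2 * l * p + t\<^sup>2 * p / b - b * (l\<^sup>2 * p) \<le> a * p"
    by (simp add: algebra_simps)
  have "2 * Re (cinner (X *v u) w) = 2 * l * p + (Re (cinner (X *v u) w') - Re (cinner (X *v w') u))"
    using lp e1 e2 by simp
  also have "\<dots> \<le> 2 * l * p + t\<^sup>2 * p / b + b * Re (cinner (X *v w') w')"
    using skew by simp
  also have "Re (cinner (X *v w') w') = Re (cinner (X *v w) w) - l\<^sup>2 * p"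
    using e3 lp by (simp add: power2_eq_square algebra_simps)
  also have "2 * l * p + t\<^sup>2 * p / b + b * (Re (cinner (X *v w) w) - l\<^sup>2 * p)
      \<le> a * p + b * Re (cinner (X *v w) w)"
    using scalar by (simp add: algebra_simps)
  finally show ?thesis
    unfolding p_def .
qed

lemma sectorial_norm_form_le:
  assumes X: "sectorial t X" and t: "0 \<le> t"
  shows "cmod (cinner (X *v x) y)
           \<le> sqrt (1 + t\<^sup>2) / 2 * (Re (cinner (X *v x) x) + Re (cinner (X *v y) y))"
proof -
  define z where "z = cinner (X *v x) y"
  obtain \<beta> where \<beta>: "cnj \<beta> * \<beta> = 1" "cnj \<beta> * z = cmod z"
  proof (cases "z = 0")
    case True
    then show ?thesis
      using that[of 1] by simp
  next
    case False
    then show ?thesis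
      using that[of "sgn z"]
      by (simp add: sgn_eq divide_simps mult.commute
          flip: of_real_mult power2_eq_square complex_norm_square)
  qed
  have "(1 + t\<^sup>2) \<le> sqrt (1 + t\<^sup>2) * sqrt (1 + t\<^sup>2)"
    by simp
  then have "2 * Re (cinner (X *v x) (\<beta> *s y))
      \<le> sqrt (1 + t\<^sup>2) * Re (cinner (X *v x) x)
        + sqrt (1 + t\<^sup>2) * Re (cinner (X *v (\<beta> *s y)) (\<beta> *s y))"
    using t by (intro sectorial_Re_form_le[OF X t]) (auto simp: add_pos_nonneg)
  moreover have "cinner (X *v x) (\<beta> *s y) = cmod z"
    and "cinner (X *v (\<beta> *s y)) (\<beta> *s y) = cinner (X *v y) y"
    using \<beta> by (simp_all add: z_def cinner_form_simps mult.assoc[symmetric] mult.commute[of \<beta>])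
  ultimately show ?thesis
    by (simp add: z_def algebra_simps)
qed

lemma sectorial_Re_cinner_le:
  assumes A: "sectorial t A" and t: "0 \<le> t"
  shows "2 * Re (cinner w a)
           \<le> Re (cinner (matrix_inv A *v w) w) + (1 + t\<^sup>2) * Re (cinner (A *v a) a)"
proof -
  define u where "u = matrix_inv A *v w"
  have Au: "A *v u = w"
    using sectorial_invertible[OF A] by (simp add: u_def matrix_vector_mult_matrix_inv)
  have "2 * Re (cinner (A *v u) a) \<le> 1 * Re (cinner (A *v u) u) + (1 + t\<^sup>2) * Re (cinner (A *v a) a)"
    by (rule sectorial_Re_form_le[OF A t]) (auto simp: add_pos_nonneg)
  then show ?thesis
    unfolding u_def[symmetric] using Re_cinner_commute[of w u] by (simp add: Au)
qed

lemma harm_mean_Re_le: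
  assumes A: "sectorial t A" and B: "sectorial t B" and C: "sectorial t C" and D: "sectorial t D"
    and t: "0 \<le> t" and s: "0 \<le> s" "s \<le> 1"
    and AC: "\<And>v. Re (cinner (A *v v) v) \<le> Re (cinner (C *v v) v)"
    and BD: "\<And>v. Re (cinner (B *v v) v) \<le> Re (cinner (D *v v) v)"
  shows "Re (cinner (harm_mean s A B *v x) x) \<le> (1 + t\<^sup>2) * Re (cinner (harm_mean s C D *v x) x)"
proof -
  define k where "k = 1 + t\<^sup>2"
  have k: "0 \<le> k"
    by (simp add: k_def)
  define M where "M = (1 - s) *\<^sub>R matrix_inv A + s *\<^sub>R matrix_inv B"
  define N where "N = (1 - s) *\<^sub>R matrix_inv C + s *\<^sub>R matrix_inv D"
  have "sectorial t M" "sectorial t N"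
    unfolding M_def N_def using A B C D s by (auto intro: sectorial_convex_comb sectorial_matrix_inv)
  then have "invertible M" "invertible N"
    by (auto intro: sectorial_invertible)
  define w where "w = harm_mean s A B *v x"
  define w' where "w' = harm_mean s C D *v x"
  have Mw: "M *v w = x" and Nw': "N *v w' = x"
    using \<open>invertible M\<close> \<open>invertible N\<close>
    by (simp_all add: w_def w'_def M_def N_def harm_mean_def matrix_vector_mult_matrix_inv)
  define a where "a = matrix_inv C *v w'"
  define b where "b = matrix_inv D *v w'"
  have Ca: "C *v a = w'" and Db: "D *v b = w'"
    using C D by (simp_all add: a_def b_def sectorial_invertible matrix_vector_mult_matrix_inv)
  have x: "x = (1 - s) *\<^sub>R a + s *\<^sub>R b"
    using Nw' by (simp add: N_def a_def b_def cinner_form_simps)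
  have "2 * Re (cinner w a) \<le> Re (cinner (matrix_inv A *v w) w) + k * Re (cinner w' a)"
    using sectorial_Re_cinner_le[OF A t, of w a] mult_left_mono[OF AC[of a] k]
    by (simp add: k_def Ca)
  moreover have "2 * Re (cinner w b) \<le> Re (cinner (matrix_inv B *v w) w) + k * Re (cinner w' b)"
    using sectorial_Re_cinner_le[OF B t, of w b] mult_left_mono[OF BD[of b] k]
    by (simp add: k_def Db)
  ultimately have "(1 - s) * (2 * Re (cinner w a)) + s * (2 * Re (cinner w b))
      \<le> (1 - s) * (Re (cinner (matrix_inv A *v w) w) + k * Re (cinner w' a))
        + s * (Re (cinner (matrix_inv B *v w) w) + k * Re (cinner w' b))"
    using s by (intro add_mono mult_left_mono) auto
  also have "\<dots> = Re (cinner (M *v w) w) + k * Re (cinner w' x)"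
    by (simp add: M_def x cinner_form_simps algebra_simps)
  finally have "2 * Re (cinner w x) \<le> Re (cinner w x) + k * Re (cinner w' x)"
    using Mw Re_cinner_commute[of w x] by (simp add: x cinner_form_simps algebra_simps)
  then show ?thesis
    by (simp add: w_def w'_def k_def)
qed

lemma matrix_inv_entry:
  fixes X :: "'a::field ^ 'n::finite ^ 'n"
  assumes "invertible X"
  shows "matrix_inv X $ k $ j = det (\<chi> i l. if l = k then axis j 1 $ i else X $ i $ l) / det X"
proof -
  have inv: "X *v (matrix_inv X *v axis j 1) = axis j 1"
    using assms by (rule matrix_vector_mult_matrix_inv)
  have "det (\<chi> i l. if l = k then axis j 1 $ i else X $ i $ l) = (matrix_inv X *v axis j 1) $ k * det X"
    using cramer_lemma[of k X "matrix_inv X *v axis j 1"] unfolding inv .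
  moreover have "(matrix_inv X *v axis j 1) $ k = matrix_inv X $ k $ j"
    by (simp add: matrix_vector_mult_def axis_def if_distrib cong: if_cong)
  ultimately show ?thesis
    using assms by (simp add: invertible_det_nz)
qed

lemma continuous_on_det:
  fixes F :: "'a::topological_space \<Rightarrow> 'b::real_normed_field ^ 'n ^ 'n"
  assumes "\<And>i j. continuous_on S (\<lambda>s. F s $ i $ j)"
  shows "continuous_on S (\<lambda>s. det (F s))"
  unfolding det_def by (intro continuous_intros assms)

lemma continuous_on_matrix_inv:
  fixes F :: "'a::topological_space \<Rightarrow> 'b::real_normed_field ^ 'n ^ 'n"
  assumes F: "continuous_on S F" and inv: "\<And>s. s \<in> S \<Longrightarrow> invertible (F s)"
  shows "continuous_on S (\<lambda>s. matrix_inv (F s))"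
proof -
  have "continuous_on S
      (\<lambda>s. \<chi> k j. det (\<chi> i l. if l = k then axis j 1 $ i else F s $ i $ l) / det (F s))"
  proof (intro continuous_on_vec_lambda continuous_on_divide continuous_on_det ballI)
    fix k j i l
    show "continuous_on S (\<lambda>s. (\<chi> i l. if l = k then axis j 1 $ i else F s $ i $ l) $ i $ l)"
      using F by (cases "l = k") (simp_all add: continuous_on_component)
    show "continuous_on S (\<lambda>s. F s $ i $ l)"
      using F by (intro continuous_on_component)
  next
    fix s
    assume "s \<in> S"
    then show "det (F s) \<noteq> 0"
      using inv by (simp add: invertible_det_nz)
  qed
  then show ?thesis
    by (rule continuous_on_cong[THEN iffD1, rotated 2]) (simp_all add: matrix_inv_entry inv vec_eq_iff)
qed

lemma continuous_on_harm_mean: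
  assumes "sectorial t X" "sectorial t Y"
  shows "continuous_on {0..1} (\<lambda>s. harm_mean s X Y)"
  unfolding harm_mean_def
proof (rule continuous_on_matrix_inv)
  show "continuous_on {0..1} (\<lambda>s. (1 - s) *\<^sub>R matrix_inv X + s *\<^sub>R matrix_inv Y)"
    by (intro continuous_intros)
  show "invertible ((1 - s) *\<^sub>R matrix_inv X + s *\<^sub>R matrix_inv Y)" if "s \<in> {0..1}" for s
    using assms that by (auto intro: sectorial_invertible sectorial_convex_comb sectorial_matrix_inv)
qed

lemma integrable_continuous_on_compact:
  fixes f :: "'a::topological_space \<Rightarrow> 'b::{banach, second_countable_topology}"
  assumes "finite_measure M" and sets: "sets M = sets (restrict_space borel S)"
    and "compact S" and f: "continuous_on S f"
  shows "integrable M f"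
proof -
  interpret finite_measure M
    by fact
  have "space M = S"
    using sets_eq_imp_space_eq[OF sets] by (simp add: space_restrict_space)
  moreover obtain B where "\<forall>x\<in>S. norm (f x) \<le> B"
    using compact_imp_bounded[OF compact_continuous_image[OF f \<open>compact S\<close>]]
    by (auto simp: bounded_iff)
  moreover have "f \<in> borel_measurable M"
    unfolding measurable_cong_sets[OF sets refl] by (rule borel_measurable_continuous_on_restrict[OF f])
  ultimately show ?thesis
    by (intro integrable_const_bound[where B = B] AE_I2) auto
qed

lemma bounded_linear_cinner_form: "bounded_linear (\<lambda>X :: complex ^ 'n ^ 'n. cinner (X *v x) y)"
  unfolding linear_conv_bounded_linear[symmetric]
  by (rule linearI) (simp_all add: cinner_form_simps scaleR_conv_of_real[where 'a = complex])

lemma matrix_mean_norm_form_le: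
  assumes \<nu>: "prob_space \<nu>" and sets: "sets \<nu> = sets (restrict_space borel {0..1})"
    and A: "sectorial t A" and B: "sectorial t B" and C: "sectorial t C" and D: "sectorial t D"
    and t: "0 \<le> t"
    and AC: "\<And>v. Re (cinner (A *v v) v) \<le> Re (cinner (C *v v) v)"
    and BD: "\<And>v. Re (cinner (B *v v) v) \<le> Re (cinner (D *v v) v)"
  shows "cmod (cinner (matrix_mean \<nu> A B *v x) y)
           \<le> (1 + t\<^sup>2) * sqrt (1 + t\<^sup>2) / 2
              * (Re (cinner (matrix_mean \<nu> C D *v x) x) + Re (cinner (matrix_mean \<nu> C D *v y) y))"
proof -
  interpret prob_space \<nu>
    by (rule \<nu>)
  define c where "c = (1 + t\<^sup>2) * sqrt (1 + t\<^sup>2) / 2"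
  define H where "H s = harm_mean s A B" for s
  define K where "K s = harm_mean s C D" for s
  have space: "space \<nu> = {0..1}"
    using sets_eq_imp_space_eq[OF sets] by (simp add: space_restrict_space)
  have int: "integrable \<nu> H" "integrable \<nu> K"
    unfolding H_def K_def using A B C D
    by (auto intro!: integrable_continuous_on_compact[OF _ sets] continuous_on_harm_mean
        simp: finite_measure_axioms)
  have form: "bounded_linear (\<lambda>X. cinner (X *v u) v)" for u v :: "complex ^ 'n"
    by (rule bounded_linear_cinner_form)
  have Re_form: "bounded_linear (\<lambda>X. Re (cinner (X *v v) v))" for v :: "complex ^ 'n"
    using bounded_linear_compose[OF bounded_linear_Re form[of v v]] by simp
  have "cmod (cinner (matrix_mean \<nu> A B *v x) y) = cmod (\<integral>s. cinner (H s *v x) y \<partial>\<nu>)"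
    unfolding matrix_mean_def H_def[symmetric] integral_bounded_linear[OF form int(1)] ..
  also have "\<dots> \<le> (\<integral>s. cmod (cinner (H s *v x) y) \<partial>\<nu>)"
    by (rule integral_norm_bound)
  also have "\<dots> \<le> (\<integral>s. c * (Re (cinner (K s *v x) x) + Re (cinner (K s *v y) y)) \<partial>\<nu>)"
  proof (rule integral_mono)
    show "integrable \<nu> (\<lambda>s. cmod (cinner (H s *v x) y))"
      by (intro integrable_norm integrable_bounded_linear[OF form int(1)])
    show "integrable \<nu> (\<lambda>s. c * (Re (cinner (K s *v x) x) + Re (cinner (K s *v y) y)))"
      by (intro integrable_mult_right Bochner_Integration.integrable_add
          integrable_bounded_linear[OF Re_form int(2)])
  next
    fix s
    assume "s \<in> space \<nu>"
    then have s: "0 \<le> s" "s \<le> 1"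
      by (auto simp: space)
    have "sectorial t (H s)"
      unfolding H_def harm_mean_def using A B s
      by (auto intro: sectorial_matrix_inv sectorial_convex_comb)
    then have "cmod (cinner (H s *v x) y)
        \<le> sqrt (1 + t\<^sup>2) / 2 * (Re (cinner (H s *v x) x) + Re (cinner (H s *v y) y))"
      using t by (rule sectorial_norm_form_le)
    also have "\<dots> \<le> sqrt (1 + t\<^sup>2) / 2
        * ((1 + t\<^sup>2) * Re (cinner (K s *v x) x) + (1 + t\<^sup>2) * Re (cinner (K s *v y) y))"
      unfolding H_def K_def using harm_mean_Re_le[OF A B C D t s AC BD]
      by (intro mult_left_mono add_mono) auto
    also have "\<dots> = c * (Re (cinner (K s *v x) x) + Re (cinner (K s *v y) y))"
      by (simp add: c_def algebra_simps)
    finally show "cmod (cinner (H s *v x) y) \<le> c * (Re (cinner (K s *v x) x) + Re (cinner (K s *v y) y))" .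
  qed
  also have "\<dots> = c * (Re (cinner (matrix_mean \<nu> C D *v x) x) + Re (cinner (matrix_mean \<nu> C D *v y) y))"
    unfolding matrix_mean_def K_def[symmetric]
    using integral_bounded_linear[OF Re_form int(2)] integrable_bounded_linear[OF Re_form int(2)]
    by simp
  finally show ?thesis
    unfolding c_def .
qed

lemma norm_cinner_matrix_le:
  fixes K :: "complex ^ 'n ^ 'n"
  assumes "norm x = 1" "norm y = 1"
  shows "cmod (cinner (K *v x) y) \<le> (\<Sum>i\<in>UNIV. \<Sum>j\<in>UNIV. cmod (K $ i $ j))"
proof -
  have "cmod (cinner (K *v x) y) = cmod (\<Sum>i\<in>UNIV. \<Sum>j\<in>UNIV. K $ i $ j * x $ j * cnj (y $ i))"
    by (simp add: cinner_def matrix_vector_mult_def sum_distrib_right)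
  also have "\<dots> \<le> (\<Sum>i\<in>UNIV. \<Sum>j\<in>UNIV. cmod (K $ i $ j * x $ j * cnj (y $ i)))"
    by (intro order_trans[OF norm_sum] sum_mono norm_sum)
  also have "\<dots> \<le> (\<Sum>i\<in>UNIV. \<Sum>j\<in>UNIV. cmod (K $ i $ j))"
  proof (intro sum_mono)
    fix i j
    have "cmod (x $ j) * cmod (y $ i) \<le> 1"
      using assms Finite_Cartesian_Product.norm_nth_le[of x] Finite_Cartesian_Product.norm_nth_le[of y]
      by (intro mult_le_one) auto
    then show "cmod (K $ i $ j * x $ j * cnj (y $ i)) \<le> cmod (K $ i $ j)"
      by (simp add: norm_mult mult.assoc mult_left_le)
  qed
  finally show ?thesis .
qed

lemma cinner_axis_right: "cinner z (axis i 1) = z $ i"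
  by (simp add: cinner_def axis_def if_distrib cong: if_cong)

lemma exists_unit_orthogonal:
  fixes z :: "complex ^ 'n"
  assumes "CARD('n) \<ge> 2"
  shows "\<exists>e. norm e = 1 \<and> cinner z e = 0"
proof -
  have "\<not> CARD('n) \<le> Suc 0"
    using assms by simp
  then obtain i j :: 'n where ij: "i \<noteq> j"
    by (auto simp: card_le_Suc0_iff_eq)
  obtain e where e: "e \<noteq> 0" "cinner z e = 0"
  proof (cases "z $ i = 0")
    case True
    then show ?thesis
      using that[of "axis i 1"] by (simp add: cinner_axis_right axis_eq_0_iff)
  next
    case False
    let ?e = "cnj (z $ j) *s axis i 1 - cnj (z $ i) *s axis j 1"
    have "?e $ j \<noteq> 0"
      using False ij[symmetric] by (simp add: axis_def)
    then have "?e \<noteq> 0"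
      by (metis zero_index)
    moreover have "cinner z ?e = 0"
      by (simp add: cinner_diff_right cinner_scaleC_right cinner_axis_right)
    ultimately show ?thesis
      by (rule that)
  qed
  then show ?thesis
    by (intro exI[of _ "(1 / norm e) *\<^sub>R e"]) (simp add: cinner_scaleR_right)
qed

lemma exists_unit_cinner_eq_ge:
  fixes z :: "complex ^ 'n" and K :: "complex ^ 'n ^ 'n"
  assumes card: "CARD('n) \<ge> 2" and z: "norm z = 1" and q: "cmod q \<le> 1"
  shows "\<exists>y. norm y = 1 \<and> cinner z y = q \<and> cmod q * cmod (cinner (K *v z) z) \<le> cmod (cinner (K *v z) y)"
proof -
  obtain e where e: "norm e = 1" "cinner z e = 0"
    using exists_unit_orthogonal[OF card] by blast
  define r where "r = sqrt (1 - (cmod q)\<^sup>2)"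
  define a where "a = q * cinner (K *v z) z"
  define c where "c = of_real r * cinner (K *v z) e"
  have "2 * cmod a \<le> cmod (a + c) + cmod (a - c)"
    using norm_triangle_ineq[of "a + c" "a - c"] by simp
  then obtain \<sigma> :: real where \<sigma>: "\<sigma>\<^sup>2 = 1" and large: "cmod a \<le> cmod (a + of_real \<sigma> * c)"
  proof (cases "cmod a \<le> cmod (a + c)")
    case True
    then show ?thesis
      using that[of 1] by simp
  next
    case False
    then show ?thesis
      using that[of "-1"] \<open>2 * cmod a \<le> cmod (a + c) + cmod (a - c)\<close> by simp
  qed
  \<comment> \<open>\<open>\<langle>z, y\<rangle> = q\<close> for either sign; \<open>\<sigma>\<close> keeps the \<open>e\<close>-component from cancelling \<open>q \<langle>K z, z\<rangle>\<close>.\<close>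
  define y where "y = cnj q *s z + (\<sigma> * r) *\<^sub>R e"
  have zz: "cinner z z = 1" and ee: "cinner e e = 1" and ez: "cinner e z = 0"
    using z e by (simp_all add: cinner_self cinner_commute[of e z])
  have "cinner y y = q * cnj q * cinner z z + of_real ((\<sigma> * r)\<^sup>2) * cinner e e"
    by (simp add: y_def cinner_add_left cinner_add_right cinner_scaleC_left cinner_scaleC_right
        cinner_scaleR_left cinner_scaleR_right e(2) ez power2_eq_square algebra_simps)
  also have "\<dots> = of_real ((cmod q)\<^sup>2) + of_real ((\<sigma> * r)\<^sup>2)"
    by (simp only: zz ee complex_norm_square mult_1_right)
  also have "\<dots> = of_real ((cmod q)\<^sup>2 + \<sigma>\<^sup>2 * r\<^sup>2)"
    by (simp add: power_mult_distrib)
  also have "(cmod q)\<^sup>2 + \<sigma>\<^sup>2 * r\<^sup>2 = 1"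
    using q \<sigma> power_le_one[of "cmod q" 2] by (simp add: r_def)
  finally have "(norm y)\<^sup>2 = 1"
    by (simp add: cinner_self del: of_real_power)
  then have "norm y = 1"
    using norm_ge_zero[of y] by (simp add: power2_eq_1_iff)
  moreover have "cinner z y = q"
    by (simp add: y_def cinner_add_right cinner_scaleC_right cinner_scaleR_right zz e(2))
  moreover have "cinner (K *v z) y = a + of_real \<sigma> * c"
    by (simp add: y_def a_def c_def cinner_add_right cinner_scaleC_right cinner_scaleR_right
        mult_ac)
  ultimately show ?thesis
    using large by (auto simp: a_def norm_mult)
qed

lemma bdd_above_q_numerical_range:
  "bdd_above {cmod (cinner (K *v x) y) | x y. norm x = 1 \<and> norm y = 1 \<and> cinner x y = q}"
  by (rule bdd_aboveI[where M = "\<Sum>i\<in>UNIV. \<Sum>j\<in>UNIV. cmod (K $ i $ j)"])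
    (auto intro: norm_cinner_matrix_le)

lemma q_numerical_radius_ge:
  assumes "CARD('n) \<ge> 2" "cmod q \<le> 1" and z: "norm z = 1"
  shows "cmod q * cmod (cinner ((K :: complex ^ 'n ^ 'n) *v z) z) \<le> q_numerical_radius q K"
proof -
  obtain y where y: "norm y = 1" "cinner z y = q"
    and le: "cmod q * cmod (cinner (K *v z) z) \<le> cmod (cinner (K *v z) y)"
    using exists_unit_cinner_eq_ge[OF assms(1) z assms(2)] by blast
  have "cmod (cinner (K *v z) y) \<le> q_numerical_radius q K"
    unfolding q_numerical_radius_def using y z by (intro cSup_upper bdd_above_q_numerical_range) auto
  then show ?thesis
    using le by linarith
qed

lemma q_numerical_radius_le:
  fixes K :: "complex ^ 'n ^ 'n"
  assumes card: "CARD('n) \<ge> 2" and q: "cmod q \<le> 1"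
    and bound: "\<And>x y. norm x = 1 \<Longrightarrow> norm y = 1 \<Longrightarrow> cinner x y = q \<Longrightarrow> cmod (cinner (K *v x) y) \<le> c"
  shows "q_numerical_radius q K \<le> c"
proof -
  obtain z :: "complex ^ 'n" where z: "norm z = 1"
    using exists_unit_orthogonal[OF card, of 0] by blast
  obtain y where "norm y = 1" "cinner z y = q"
    using exists_unit_cinner_eq_ge[OF card z q, of K] by blast
  then show ?thesis
    unfolding q_numerical_radius_def using z bound by (intro cSup_least) auto
qed

lemma q_numerical_radius_le_form_bound:
  fixes H K :: "complex ^ 'n ^ 'n"
  assumes card: "CARD('n) \<ge> 2" and q: "0 < cmod q" "cmod q \<le> 1" and c: "0 \<le> c"
    and bound: "\<And>x y. norm x = 1 \<Longrightarrow> norm y = 1 \<Longrightarrow>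
      cmod (cinner (H *v x) y) \<le> c / 2 * (Re (cinner (K *v x) x) + Re (cinner (K *v y) y))"
  shows "cmod q * q_numerical_radius q H \<le> c * q_numerical_radius q K"
proof -
  define W where "W = q_numerical_radius q K"
  have Re_le: "Re (cinner (K *v z) z) \<le> W / cmod q" if "norm z = 1" for z
  proof -
    have "cmod q * Re (cinner (K *v z) z) \<le> cmod q * cmod (cinner (K *v z) z)"
      using q(1) by (intro mult_left_mono complex_Re_le_cmod) auto
    also have "\<dots> \<le> W"
      unfolding W_def using card q(2) that by (rule q_numerical_radius_ge)
    finally show ?thesis
      using q(1) by (simp add: pos_le_divide_eq mult.commute)
  qed
  have "q_numerical_radius q H \<le> c * W / cmod q"
  proof (rule q_numerical_radius_le[OF card q(2)])
    fix x y :: "complex ^ 'n"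
    assume x: "norm x = 1" and y: "norm y = 1"
    have "cmod (cinner (H *v x) y) \<le> c / 2 * (Re (cinner (K *v x) x) + Re (cinner (K *v y) y))"
      using x y by (rule bound)
    also have "\<dots> \<le> c / 2 * (W / cmod q + W / cmod q)"
      using c Re_le[OF x] Re_le[OF y] by (intro mult_left_mono add_mono) auto
    finally show "cmod (cinner (H *v x) y) \<le> c * W / cmod q"
      by simp
  qed
  then show ?thesis
    using q(1) by (simp add: W_def field_simps)
qed

lemma sec_cube_eq:
  assumes "0 < cos x"
  shows "(1 / cos x) ^ 3 = (1 + (tan x)\<^sup>2) * sqrt (1 + (tan x)\<^sup>2)"
proof -
  have "1 + (tan x)\<^sup>2 = (1 / cos x)\<^sup>2"
    using tan_sec[of x] assms by (simp add: inverse_eq_divide)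
  moreover have "sqrt ((1 / cos x)\<^sup>2) = 1 / cos x"
    using assms by simp
  ultimately show ?thesis
    by (simp add: power3_eq_cube power2_eq_square)
qed

theorem mainTheorem9:
  fixes A B C D :: "complex ^ 'n ^ 'n"
    and \<alpha> :: real and q :: complex
    and f :: "real \<Rightarrow> real" and \<nu> :: "real measure"
  assumes "CARD('n) \<ge> 2"
    and "0 \<le> \<alpha>" and "\<alpha> < pi / 2"
    and "A \<in> Pi_sector \<alpha>" and "B \<in> Pi_sector \<alpha>"
    and "C \<in> Pi_sector \<alpha>" and "D \<in> Pi_sector \<alpha>"
    and "0 < cmod q" and "cmod q \<le> 1"
    and "\<forall>x>0. f x > 0" and "f 1 = 1"
    and "operator_monotone_dim f TYPE('n)"
    and "prob_space \<nu>" and "sets \<nu> = sets (restrict_space borel {0..1})"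
    and "\<forall>x>0. f x = (\<integral>s. inverse ((1 - s) + s * inverse x) \<partial>\<nu>)"
    and "loewner_le (realpart_mat A) (realpart_mat C)"
    and "loewner_le (realpart_mat B) (realpart_mat D)"
  shows "cmod q * q_numerical_radius q (matrix_mean \<nu> A B)
           \<le> (1 / cos \<alpha>) ^ 3 * q_numerical_radius q (matrix_mean \<nu> C D)"
proof -
  define t where "t = tan \<alpha>"
  have t: "0 \<le> t"
    using assms(2,3) tan_gt_zero[of \<alpha>] by (cases "\<alpha> = 0") (auto simp: t_def)
  have sec: "(1 / cos \<alpha>) ^ 3 = (1 + t\<^sup>2) * sqrt (1 + t\<^sup>2)"
    using assms(2,3) by (simp add: t_def sec_cube_eq cos_gt_zero_pi)
  have sectorial: "sectorial t A" "sectorial t B" "sectorial t C" "sectorial t D"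
    using assms(4-7) by (simp_all add: t_def Pi_sector_imp_sectorial)
  have "\<And>v. Re (cinner (A *v v) v) \<le> Re (cinner (C *v v) v)"
    and "\<And>v. Re (cinner (B *v v) v) \<le> Re (cinner (D *v v) v)"
    using assms(16,17) by (simp_all add: loewner_le_realpart_iff)
  then have "cmod (cinner (matrix_mean \<nu> A B *v x) y)
      \<le> (1 / cos \<alpha>) ^ 3 / 2
         * (Re (cinner (matrix_mean \<nu> C D *v x) x) + Re (cinner (matrix_mean \<nu> C D *v y) y))"
    for x y
    unfolding sec using matrix_mean_norm_form_le[OF assms(13,14) sectorial t] by simp
  moreover have "0 \<le> (1 / cos \<alpha>) ^ 3"
    using sec by simp
  ultimately show ?thesis
    using assms(1,8,9) by (intro q_numerical_radius_le_form_bound) auto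
qed

end
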